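(* Let $G$ be a finitely generated amenable group with a fixed finite symmetric generating set $S$. Let $H_i\subseteq G$ be any sequence of finite index subgroups with $I_i=[G:H_i]\to\infty$, and let $C_i=G/H_i$. Then $$\lim_{i\to\infty}\frac{\operatorname{sw}(C_i)}{I_i}=0.$$
   Context: The coset space $C=G/H$ (cosets $gH$) is given the graph structure of the Schreier graph: there is an edge between distinct cosets $x$ and $y$ iff $y=sx$ for some $s\in S$ (where $G$ acts on cosets by left multiplication). For $A\subseteq C$, $\partial A$ denotes the set of vertices of $A$ adjacent to some vertex of the complement of $A$. A sweepout $\mathfrak F$ of the finite graph $C$ is a nested sequence of subsets $\emptyset=F_0\subseteq F_1\subseteq\dots\subseteq F_{|C|}=C$ with $|F_j|=j$; its width is $\operatorname{w}(\mathfrak F)=\max_j|\partial F_j|$. The sweepout width is $\operatorname{sw}(C)=\min_{\mathfrak F}\operatorname{w}(\mathfrak F)$ over all sweepouts. *)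

theory Defs
  imports "HOL-Analysis.Analysis" "HOL-Algebra.Left_Coset" "HOL-Algebra.Generated_Groups"
begin

definition amenable_group :: "('a, 'b) monoid_scheme \<Rightarrow> bool" where
  "amenable_group G \<longleftrightarrow>
     (\<forall>K eps. finite K \<and> K \<subseteq> carrier G \<and> eps > (0::real) \<longrightarrow>
        (\<exists>F. finite F \<and> F \<noteq> {} \<and> F \<subseteq> carrier G \<and>
             (\<forall>g\<in>K. real (card (((g <#\<^bsub>G\<^esub> F) - F) \<union> (F - (g <#\<^bsub>G\<^esub> F))))
                        < eps * real (card F))))"

definition schreier_adj :: "('a, 'b) monoid_scheme \<Rightarrow> 'a set \<Rightarrow> 'a set \<Rightarrow> 'a set \<Rightarrow> bool" where
  "schreier_adj G S x y \<longleftrightarrow> x \<noteq> y \<and>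
     (\<exists>s\<in>S. y = s <#\<^bsub>G\<^esub> x \<or> x = s <#\<^bsub>G\<^esub> y)"

definition schreier_boundary ::
  "('a, 'b) monoid_scheme \<Rightarrow> 'a set \<Rightarrow> 'a set \<Rightarrow> 'a set set \<Rightarrow> 'a set set" where
  "schreier_boundary G S H A =
     {x\<in>A. \<exists>y\<in>lcosets\<^bsub>G\<^esub> H - A. schreier_adj G S x y}"

definition is_sweepout :: "'c set \<Rightarrow> (nat \<Rightarrow> 'c set) \<Rightarrow> bool" where
  "is_sweepout C F \<longleftrightarrow> F 0 = {} \<and> F (card C) = C \<and>
     (\<forall>j<card C. F j \<subseteq> F (Suc j)) \<and>
     (\<forall>j\<le>card C. F j \<subseteq> C \<and> card (F j) = j)"

definition sweepout_width ::
  "('a, 'b) monoid_scheme \<Rightarrow> 'a set \<Rightarrow> 'a set \<Rightarrow> (nat \<Rightarrow> 'a set set) \<Rightarrow> nat" where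
  "sweepout_width G S H F =
     Max {card (schreier_boundary G S H (F j)) | j. j \<le> card (lcosets\<^bsub>G\<^esub> H)}"

definition sweepout_width_min :: "('a, 'b) monoid_scheme \<Rightarrow> 'a set \<Rightarrow> 'a set \<Rightarrow> nat" where
  "sweepout_width_min G S H =
     Min {sweepout_width G S H F | F. is_sweepout (lcosets\<^bsub>G\<^esub> H) F}"

end

theory Submission
  imports Defs
begin

text \<open>Let F be a Foelner set: each generator moves at most a \<delta>-fraction of F out of F.
  In any nonempty set W of cosets, consider the level sets {y \<in> W. t \<le> #{f \<in> F. f x = y}}
  for all cosets x and 1 \<le> t \<le> card F. Their total size is card W * card F, and a discrete
  coarea inequality bounds their total boundary relative to W by card S * \<delta> times that, so
  one of them is a nonempty piece of at most card F cosets with boundary at most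
  card S * \<delta> times its size. Peeling off such pieces greedily enumerates G/H so that every
  prefix has at most card S * \<delta> * [G:H] + card F boundary cosets. Thus sw(G/H) is at most
  \<epsilon> [G:H] + K uniformly in H, with K depending only on \<epsilon>, which gives the theorem as
  [G:H] tends to infinity.\<close>

text \<open>The boundary of A relative to an ambient vertex set W, which shrinks during greedy
  peeling; schreier_boundary is the case W = G/H.\<close>

definition vertex_boundary :: "('x \<Rightarrow> 'x \<Rightarrow> bool) \<Rightarrow> 'x set \<Rightarrow> 'x set \<Rightarrow> 'x set" where
  "vertex_boundary adj W A = {y\<in>A. \<exists>z\<in>W - A. adj y z}"

lemma vertex_boundary_subset: "vertex_boundary adj W A \<subseteq> A"
  unfolding vertex_boundary_def by blast

lemma card_vertex_boundary_Un_le: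
  assumes "finite W" and "B \<subseteq> W" and "P \<subseteq> W - B"
  shows "card (vertex_boundary adj W (B \<union> P))
           \<le> card (vertex_boundary adj W B) + card (vertex_boundary adj (W - B) P)"
proof -
  have "finite (vertex_boundary adj W B \<union> vertex_boundary adj (W - B) P)"
    using assms vertex_boundary_subset by (meson finite_Diff finite_Un finite_subset)
  moreover have "vertex_boundary adj W (B \<union> P) \<subseteq> vertex_boundary adj W B \<union> vertex_boundary adj (W - B) P"
    using assms(2) unfolding vertex_boundary_def by blast
  ultimately have "card (vertex_boundary adj W (B \<union> P))
      \<le> card (vertex_boundary adj W B \<union> vertex_boundary adj (W - B) P)"
    by (rule card_mono)
  also have "\<dots> \<le> card (vertex_boundary adj W B) + card (vertex_boundary adj (W - B) P)"
    by (rule card_Un_le)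
  finally show ?thesis .
qed

lemma sum_level_sets_card:
  fixes w :: "'x \<Rightarrow> nat"
  assumes "finite W" and "\<And>y. y \<in> W \<Longrightarrow> w y \<le> N"
  shows "(\<Sum>t\<in>{1..N}. card {y\<in>W. t \<le> w y}) = (\<Sum>y\<in>W. w y)"
proof -
  have "(\<Sum>t\<in>{1..N}. card {y\<in>W. t \<le> w y}) = (\<Sum>t\<in>{1..N}. \<Sum>y\<in>W. of_bool (t \<le> w y))"
    using assms(1) by (simp add: Int_def conj_commute)
  also have "\<dots> = (\<Sum>y\<in>W. \<Sum>t\<in>{1..N}. of_bool (t \<le> w y))"
    by (rule sum.swap)
  also have "\<dots> = (\<Sum>y\<in>W. card {1..w y})"
  proof (rule sum.cong[OF refl])
    fix y assume "y \<in> W"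
    then have "{1..N} \<inter> {t. t \<le> w y} = {1..w y}" using assms(2)[of y] by auto
    then show "(\<Sum>t\<in>{1..N}. of_bool (t \<le> w y)) = card {1..w y}" by simp
  qed
  finally show ?thesis by simp
qed

text \<open>Discrete coarea inequality: y is on the boundary of the level set {t \<le> w} only if w
  drops below t along some edge from y; the truncated difference counts only such drops.\<close>

lemma sum_card_boundary_level_sets_le:
  fixes w :: "'x \<Rightarrow> nat" and \<sigma> :: "'s \<Rightarrow> 'x \<Rightarrow> 'x"
  assumes "finite W" and "finite S"
    and adj: "\<And>y z. y \<in> W \<Longrightarrow> z \<in> W \<Longrightarrow> adj y z \<Longrightarrow> \<exists>s\<in>S. z = \<sigma> s y"
  shows "(\<Sum>t\<in>{1..N}. card (vertex_boundary adj W {y\<in>W. t \<le> w y}))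
           \<le> (\<Sum>y\<in>W. \<Sum>s\<in>S. w y - w (\<sigma> s y))"
proof -
  define crosses where "crosses t = (\<lambda>(y, s). w (\<sigma> s y) < t \<and> t \<le> w y)" for t
  have bdry_sub: "vertex_boundary adj W {y\<in>W. t \<le> w y} \<subseteq> fst ` (W \<times> S \<inter> {p. crosses t p})" for t
  proof
    fix y assume "y \<in> vertex_boundary adj W {y\<in>W. t \<le> w y}"
    then obtain z where "y \<in> W" "t \<le> w y" "z \<in> W" "\<not> t \<le> w z" "adj y z"
      unfolding vertex_boundary_def by auto
    moreover from this obtain s where "s \<in> S" "z = \<sigma> s y" using adj by blast
    ultimately show "y \<in> fst ` (W \<times> S \<inter> {p. crosses t p})"
      unfolding crosses_def by (auto intro!: image_eqI[of _ fst "(y, s)"])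
  qed
  have "card (vertex_boundary adj W {y\<in>W. t \<le> w y}) \<le> (\<Sum>p\<in>W \<times> S. of_bool (crosses t p))" for t
    using surj_card_le[OF _ bdry_sub] assms(1,2) by simp
  then have "(\<Sum>t\<in>{1..N}. card (vertex_boundary adj W {y\<in>W. t \<le> w y}))
      \<le> (\<Sum>t\<in>{1..N}. \<Sum>p\<in>W \<times> S. of_bool (crosses t p))"
    by (rule sum_mono)
  also have "\<dots> = (\<Sum>p\<in>W \<times> S. \<Sum>t\<in>{1..N}. of_bool (crosses t p))"
    by (rule sum.swap)
  also have "\<dots> \<le> (\<Sum>(y, s)\<in>W \<times> S. w y - w (\<sigma> s y))"
  proof (rule sum_mono, clarify)
    fix y s
    have "(\<Sum>t\<in>{1..N}. of_bool (crosses t (y, s))) = card ({1..N} \<inter> {t. crosses t (y, s)})"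
      by simp
    also have "\<dots> \<le> card {w (\<sigma> s y)<..w y}"
      by (rule card_mono) (auto simp: crosses_def)
    finally show "(\<Sum>t\<in>{1..N}. of_bool (crosses t (y, s))) \<le> w y - w (\<sigma> s y)"
      by simp
  qed
  finally show ?thesis
    by (simp add: sum.cartesian_product)
qed

lemma sum_card_fibres:
  assumes "finite X" and "finite F"
    and bij: "\<And>f. f \<in> F \<Longrightarrow> bij_betw (act f) X X" and "y \<in> X"
  shows "(\<Sum>x\<in>X. card {f\<in>F. act f x = y \<and> P f}) = card {f\<in>F. P f}"
proof -
  have "(\<Sum>x\<in>X. card {f\<in>F. act f x = y \<and> P f}) = card (SIGMA x:X. {f\<in>F. act f x = y \<and> P f})"
    using assms(1,2) by simp
  also have "\<dots> = card {f\<in>F. P f}"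
  proof (rule bij_betw_same_card[of snd], unfold bij_betw_def, intro conjI)
    show "inj_on snd (SIGMA x:X. {f\<in>F. act f x = y \<and> P f})"
      by (auto simp: inj_on_def intro: inj_onD[OF bij_betw_imp_inj_on[OF bij]])
    show "snd ` (SIGMA x:X. {f\<in>F. act f x = y \<and> P f}) = {f\<in>F. P f}"
    proof (intro equalityI subsetI)
      fix f assume f: "f \<in> {f\<in>F. P f}"
      then obtain x where "x \<in> X" "act f x = y"
        using bij_betw_imp_surj_on[OF bij] \<open>y \<in> X\<close> by (metis imageE mem_Collect_eq)
      with f show "f \<in> snd ` (SIGMA x:X. {f\<in>F. act f x = y \<and> P f})"
        by force
    qed auto
  qed
  finally show ?thesis .
qed

lemma exists_le_mult_of_sum_le:
  fixes a b :: "'i \<Rightarrow> real"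
  assumes "finite I" and sum_le: "(\<Sum>i\<in>I. a i) \<le> c * (\<Sum>i\<in>I. b i)" and "(\<Sum>i\<in>I. b i) > 0"
    and "\<And>i. i \<in> I \<Longrightarrow> a i \<ge> 0" and "\<And>i. i \<in> I \<Longrightarrow> b i \<ge> 0"
  shows "\<exists>i\<in>I. b i > 0 \<and> a i \<le> c * b i"
proof (rule ccontr)
  assume contra: "\<not> ?thesis"
  obtain j where "j \<in> I" "b j > 0"
    using assms(3) sum_nonpos[of I b] by (meson not_le)
  then have "\<exists>i\<in>I. c * b i < a i"
    using contra by (meson not_le)
  moreover have "c * b i \<le> a i" if "i \<in> I" for i
  proof (cases "b i > 0")
    case True
    then show ?thesis using contra that by (meson less_imp_le not_le)
  next
    case False
    then show ?thesis using assms(4,5)[OF that] by simp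
  qed
  ultimately have "(\<Sum>i\<in>I. c * b i) < (\<Sum>i\<in>I. a i)"
    using sum_strict_mono_ex1[OF \<open>finite I\<close>] by (meson ballI)
  with sum_le show False by (simp add: sum_distrib_left)
qed

lemma exists_enumeration_vertex_boundary_le:
  fixes c :: real and K :: nat
  assumes "finite X" and "c \<ge> 0"
    and small_piece: "\<And>W. W \<subseteq> X \<Longrightarrow> W \<noteq> {} \<Longrightarrow> \<exists>B\<subseteq>W. B \<noteq> {} \<and> card B \<le> K \<and>
            real (card (vertex_boundary adj W B)) \<le> c * real (card B)"
    and "W \<subseteq> X"
  shows "\<exists>xs. distinct xs \<and> set xs = W \<and>
     (\<forall>j. real (card (vertex_boundary adj W (set (take j xs)))) \<le> c * real (card W) + real K)"
  using \<open>W \<subseteq> X\<close>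
proof (induction "card W" arbitrary: W rule: less_induct)
  case less
  show ?case
  proof (cases "W = {}")
    case True
    then show ?thesis by (intro exI[of _ "[]"]) (simp add: vertex_boundary_def)
  next
    case False
    have "finite W" using less.prems \<open>finite X\<close> finite_subset by blast
    obtain B where B: "B \<subseteq> W" "B \<noteq> {}" "card B \<le> K"
      "real (card (vertex_boundary adj W B)) \<le> c * real (card B)"
      using small_piece[OF less.prems False] by blast
    have "finite B" using B(1) \<open>finite W\<close> finite_subset by blast
    have card_W: "card W = card B + card (W - B)"
      using \<open>finite W\<close> B(1) \<open>finite B\<close> by (simp add: card_Diff_subset card_mono)
    then have "card (W - B) < card W"
      using \<open>finite B\<close> B(2) by (simp add: card_gt_0_iff)
    with less.hyps obtain ys where ys: "distinct ys" "set ys = W - B"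
      "\<forall>j. real (card (vertex_boundary adj (W - B) (set (take j ys))))
             \<le> c * real (card (W - B)) + real K"
      using less.prems by blast
    obtain bs where bs: "distinct bs" "set bs = B"
      using finite_distinct_list[OF \<open>finite B\<close>] by blast
    have "real (card (vertex_boundary adj W (set (take j (bs @ ys))))) \<le> c * real (card W) + real K"
      for j
    proof (cases "j \<le> length bs")
      case True
      have "card (vertex_boundary adj W (set (take j bs))) \<le> card B"
        using vertex_boundary_subset set_take_subset[of j bs] bs(2) \<open>finite B\<close>
        by (meson card_mono order_trans)
      then have "real (card (vertex_boundary adj W (set (take j bs)))) \<le> real K"
        using B(3) by simp
      moreover have "0 \<le> c * real (card W)"
        using \<open>c \<ge> 0\<close> by simp
      ultimately show ?thesis
        using True by simp
    next
      case False
      define P where "P = set (take (j - length bs) ys)"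
      have "P \<subseteq> W - B"
        unfolding P_def using set_take_subset ys(2) by metis
      have "set (take j (bs @ ys)) = B \<union> P"
        unfolding P_def using False bs by simp
      then have "real (card (vertex_boundary adj W (set (take j (bs @ ys)))))
          \<le> real (card (vertex_boundary adj W B)) + real (card (vertex_boundary adj (W - B) P))"
        using card_vertex_boundary_Un_le[OF \<open>finite W\<close> B(1) \<open>P \<subseteq> W - B\<close>, where adj = adj]
        by (simp only: of_nat_add[symmetric] of_nat_le_iff)
      also have "\<dots> \<le> c * real (card B) + (c * real (card (W - B)) + real K)"
        using B(4) ys(3) unfolding P_def by (intro add_mono) auto
      also have "\<dots> = c * real (card W) + real K"
        using card_W by (simp add: algebra_simps)
      finally show ?thesis .
    qed
    moreover have "distinct (bs @ ys)" and "set (bs @ ys) = W"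
      using bs ys B(1) by auto
    ultimately show ?thesis by blast
  qed
qed

definition multiplicity :: "('g \<Rightarrow> 'x \<Rightarrow> 'x) \<Rightarrow> 'g set \<Rightarrow> 'x \<Rightarrow> 'x \<Rightarrow> nat" where
  "multiplicity act F x y = card {f\<in>F. act f x = y}"

lemma sum_card_multiplicity_level_sets:
  assumes "finite X" and "finite F" and bij: "\<And>f. f \<in> F \<Longrightarrow> bij_betw (act f) X X"
    and "W \<subseteq> X"
  shows "(\<Sum>x\<in>X. \<Sum>t\<in>{1..card F}. card {y\<in>W. t \<le> multiplicity act F x y}) = card W * card F"
proof -
  have "finite W"
    using \<open>W \<subseteq> X\<close> \<open>finite X\<close> finite_subset by blast
  have "multiplicity act F x y \<le> card F" for x y
    unfolding multiplicity_def using \<open>finite F\<close> by (simp add: card_mono)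
  then have "(\<Sum>x\<in>X. \<Sum>t\<in>{1..card F}. card {y\<in>W. t \<le> multiplicity act F x y})
      = (\<Sum>x\<in>X. \<Sum>y\<in>W. multiplicity act F x y)"
    using sum_level_sets_card[OF \<open>finite W\<close>] by simp
  also have "\<dots> = (\<Sum>y\<in>W. \<Sum>x\<in>X. multiplicity act F x y)"
    by (rule sum.swap)
  also have "\<dots> = card W * card F"
    using sum_card_fibres[OF \<open>finite X\<close> \<open>finite F\<close> bij, where P = "\<lambda>_. True"] \<open>W \<subseteq> X\<close>
    unfolding multiplicity_def by (simp add: subset_iff)
  finally show ?thesis .
qed

text \<open>Left multiplication by s maps the f carrying x to y into those carrying x to s y,
  except the f with s f \<notin> F.\<close>

lemma multiplicity_diff_le:
  assumes "finite F" and "inj_on (mul s) F"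
    and "\<And>f. f \<in> F \<Longrightarrow> act (mul s f) x = act s (act f x)"
  shows "multiplicity act F x y - multiplicity act F x (act s y)
           \<le> card {f\<in>F. act f x = y \<and> mul s f \<notin> F}"
proof -
  have "card {f\<in>F. act f x = y \<and> mul s f \<in> F} \<le> card {f\<in>F. act f x = act s y}"
    using assms by (intro card_inj_on_le[OF inj_on_subset[OF assms(2)]]) auto
  moreover have "multiplicity act F x y
      = card ({f\<in>F. act f x = y \<and> mul s f \<in> F} \<union> {f\<in>F. act f x = y \<and> mul s f \<notin> F})"
    unfolding multiplicity_def by (rule arg_cong[where f = card]) blast
  ultimately show ?thesis
    unfolding multiplicity_def
    using card_Un_le[of "{f\<in>F. act f x = y \<and> mul s f \<in> F}" "{f\<in>F. act f x = y \<and> mul s f \<notin> F}"]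
    by linarith
qed

lemma sum_card_boundary_multiplicity_level_sets_le:
  assumes "finite X" and "finite S" and "finite F"
    and bij: "\<And>f. f \<in> F \<Longrightarrow> bij_betw (act f) X X"
    and act_mul: "\<And>s f x. s \<in> S \<Longrightarrow> f \<in> F \<Longrightarrow> x \<in> X \<Longrightarrow> act (mul s f) x = act s (act f x)"
    and inj_mul: "\<And>s. s \<in> S \<Longrightarrow> inj_on (mul s) F"
    and adj: "\<And>y z. y \<in> X \<Longrightarrow> z \<in> X \<Longrightarrow> adj y z \<Longrightarrow> \<exists>s\<in>S. z = act s y"
    and "W \<subseteq> X"
  shows "(\<Sum>x\<in>X. \<Sum>t\<in>{1..card F}. card (vertex_boundary adj W {y\<in>W. t \<le> multiplicity act F x y}))
           \<le> card W * (\<Sum>s\<in>S. card {f\<in>F. mul s f \<notin> F})"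
proof -
  have "finite W"
    using \<open>W \<subseteq> X\<close> \<open>finite X\<close> finite_subset by blast
  have "(\<Sum>x\<in>X. \<Sum>t\<in>{1..card F}. card (vertex_boundary adj W {y\<in>W. t \<le> multiplicity act F x y}))
      \<le> (\<Sum>x\<in>X. \<Sum>y\<in>W. \<Sum>s\<in>S. multiplicity act F x y - multiplicity act F x (act s y))"
  proof (intro sum_mono sum_card_boundary_level_sets_le[OF \<open>finite W\<close> \<open>finite S\<close>])
    fix y z assume "y \<in> W" and "z \<in> W" and "adj y z"
    then show "\<exists>s\<in>S. z = act s y"
      using adj \<open>W \<subseteq> X\<close> by blast
  qed
  also have "\<dots> \<le> (\<Sum>x\<in>X. \<Sum>y\<in>W. \<Sum>s\<in>S. card {f\<in>F. act f x = y \<and> mul s f \<notin> F})"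
  proof (intro sum_mono)
    fix x y s assume "x \<in> X" and "s \<in> S"
    then show "multiplicity act F x y - multiplicity act F x (act s y)
        \<le> card {f\<in>F. act f x = y \<and> mul s f \<notin> F}"
      using act_mul[OF \<open>s \<in> S\<close> _ \<open>x \<in> X\<close>]
      by (intro multiplicity_diff_le[where act = act and mul = mul, OF \<open>finite F\<close> inj_mul[OF \<open>s \<in> S\<close>]])
  qed
  also have "\<dots> = (\<Sum>y\<in>W. \<Sum>s\<in>S. \<Sum>x\<in>X. card {f\<in>F. act f x = y \<and> mul s f \<notin> F})"
    by (subst sum.swap) (intro sum.cong refl sum.swap)
  also have "\<dots> = (\<Sum>y\<in>W. \<Sum>s\<in>S. card {f\<in>F. mul s f \<notin> F})"
  proof (intro sum.cong refl)
    fix y assume "y \<in> W"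
    then show "(\<Sum>x\<in>X. card {f\<in>F. act f x = y \<and> mul s f \<notin> F}) = card {f\<in>F. mul s f \<notin> F}" for s
      using \<open>W \<subseteq> X\<close> by (intro sum_card_fibres[where act = act, OF \<open>finite X\<close> \<open>finite F\<close> bij]) auto
  qed
  finally show ?thesis
    by simp
qed

lemma exists_small_piece_with_small_vertex_boundary:
  fixes act :: "'g \<Rightarrow> 'x \<Rightarrow> 'x" and mul :: "'g \<Rightarrow> 'g \<Rightarrow> 'g" and \<delta> :: real
  assumes "finite X" and "finite S" and "finite F" and "F \<noteq> {}"
    and bij: "\<And>f. f \<in> F \<Longrightarrow> bij_betw (act f) X X"
    and act_mul: "\<And>s f x. s \<in> S \<Longrightarrow> f \<in> F \<Longrightarrow> x \<in> X \<Longrightarrow> act (mul s f) x = act s (act f x)"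
    and inj_mul: "\<And>s. s \<in> S \<Longrightarrow> inj_on (mul s) F"
    and foelner: "\<And>s. s \<in> S \<Longrightarrow> real (card {f\<in>F. mul s f \<notin> F}) \<le> \<delta> * real (card F)"
    and adj: "\<And>y z. y \<in> X \<Longrightarrow> z \<in> X \<Longrightarrow> adj y z \<Longrightarrow> \<exists>s\<in>S. z = act s y"
    and "W \<subseteq> X" and "W \<noteq> {}"
  shows "\<exists>B\<subseteq>W. B \<noteq> {} \<and> card B \<le> card F \<and>
           real (card (vertex_boundary adj W B)) \<le> real (card S) * \<delta> * real (card B)"
proof -
  define level where "level = (\<lambda>(x, t). {y\<in>W. t \<le> multiplicity act F x y})"
  define I where "I = X \<times> {1..card F}"
  have "finite I"
    unfolding I_def using \<open>finite X\<close> by simp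
  have mass: "(\<Sum>i\<in>I. real (card (level i))) = real (card W) * real (card F)"
  proof -
    have "(\<Sum>i\<in>I. real (card (level i)))
        = real (\<Sum>x\<in>X. \<Sum>t\<in>{1..card F}. card {y\<in>W. t \<le> multiplicity act F x y})"
      unfolding I_def level_def by (simp add: sum.cartesian_product')
    also have "\<dots> = real (card W * card F)"
      by (simp only: sum_card_multiplicity_level_sets[where act = act, OF \<open>finite X\<close> \<open>finite F\<close> bij \<open>W \<subseteq> X\<close>])
    finally show ?thesis
      by simp
  qed
  have "(\<Sum>i\<in>I. real (card (vertex_boundary adj W (level i))))
      = real (\<Sum>x\<in>X. \<Sum>t\<in>{1..card F}. card (vertex_boundary adj W {y\<in>W. t \<le> multiplicity act F x y}))"
    unfolding I_def level_def by (simp add: sum.cartesian_product')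
  also have "\<dots> \<le> real (card W * (\<Sum>s\<in>S. card {f\<in>F. mul s f \<notin> F}))"
    using sum_card_boundary_multiplicity_level_sets_le[where act = act and mul = mul,
        OF assms(1-3) bij act_mul inj_mul adj \<open>W \<subseteq> X\<close>]
    by (simp only: of_nat_le_iff)
  also have "\<dots> = real (card W) * (\<Sum>s\<in>S. real (card {f\<in>F. mul s f \<notin> F}))"
    by simp
  also have "\<dots> \<le> real (card W) * (\<Sum>s\<in>S. \<delta> * real (card F))"
    by (intro mult_left_mono sum_mono foelner) simp_all
  also have "\<dots> = real (card S) * \<delta> * (\<Sum>i\<in>I. real (card (level i)))"
    unfolding mass by simp
  finally have "(\<Sum>i\<in>I. real (card (vertex_boundary adj W (level i))))
      \<le> real (card S) * \<delta> * (\<Sum>i\<in>I. real (card (level i)))" .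
  moreover have "finite W"
    using \<open>W \<subseteq> X\<close> \<open>finite X\<close> finite_subset by blast
  then have "(\<Sum>i\<in>I. real (card (level i))) > 0"
    using mass \<open>W \<noteq> {}\<close> \<open>F \<noteq> {}\<close> \<open>finite F\<close> by (simp add: card_gt_0_iff)
  ultimately have "\<exists>i\<in>I. real (card (level i)) > 0 \<and>
      real (card (vertex_boundary adj W (level i))) \<le> real (card S) * \<delta> * real (card (level i))"
    by (intro exists_le_mult_of_sum_le[OF \<open>finite I\<close>]) simp_all
  then obtain i where "i \<in> I" and "real (card (level i)) > 0"
    and small: "real (card (vertex_boundary adj W (level i))) \<le> real (card S) * \<delta> * real (card (level i))"
    by blast
  obtain x t where "i = (x, t)" "t \<ge> 1"
    using \<open>i \<in> I\<close> unfolding I_def by auto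
  have "level i \<subseteq> (\<lambda>f. act f x) ` F"
  proof
    fix y assume "y \<in> level i"
    then have "{f\<in>F. act f x = y} \<noteq> {}"
      using \<open>i = (x, t)\<close> \<open>t \<ge> 1\<close> unfolding level_def multiplicity_def by fastforce
    then show "y \<in> (\<lambda>f. act f x) ` F" by blast
  qed
  then have "card (level i) \<le> card F"
    using surj_card_le[OF \<open>finite F\<close>] by blast
  moreover have "level i \<subseteq> W" and "level i \<noteq> {}"
    using \<open>real (card (level i)) > 0\<close> unfolding level_def by (auto split: prod.splits simp: card_gt_0_iff)
  ultimately show ?thesis
    using small by blast
qed

lemma is_sweepout_take_enumeration:
  assumes "distinct xs" and "set xs = C"
  shows "is_sweepout C (\<lambda>j. set (take j xs))"
proof -
  have "length xs = card C"
    using assms distinct_card by metis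
  then show ?thesis
    using assms distinct_card[OF distinct_take[OF \<open>distinct xs\<close>]]
    unfolding is_sweepout_def by (auto simp: set_take_subset_set_take dest: in_set_takeD)
qed

lemma sweepout_width_le:
  fixes b :: real
  assumes "\<And>j. j \<le> card (lcosets\<^bsub>G\<^esub> H) \<Longrightarrow> real (card (schreier_boundary G S H (F j))) \<le> b"
  shows "real (sweepout_width G S H F) \<le> b"
proof -
  have "sweepout_width G S H F \<in> {card (schreier_boundary G S H (F j)) | j. j \<le> card (lcosets\<^bsub>G\<^esub> H)}"
    unfolding sweepout_width_def by (intro Max_in) auto
  then show ?thesis
    using assms by auto
qed

lemma sweepout_width_min_le:
  assumes "finite (lcosets\<^bsub>G\<^esub> H)" and "is_sweepout (lcosets\<^bsub>G\<^esub> H) F"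
  shows "sweepout_width_min G S H \<le> sweepout_width G S H F"
proof -
  have "real (sweepout_width G S H F') \<le> real (card (lcosets\<^bsub>G\<^esub> H))"
    if "is_sweepout (lcosets\<^bsub>G\<^esub> H) F'" for F'
  proof (rule sweepout_width_le)
    fix j assume "j \<le> card (lcosets\<^bsub>G\<^esub> H)"
    then have "schreier_boundary G S H (F' j) \<subseteq> lcosets\<^bsub>G\<^esub> H"
      using that unfolding is_sweepout_def schreier_boundary_def by blast
    then show "real (card (schreier_boundary G S H (F' j))) \<le> real (card (lcosets\<^bsub>G\<^esub> H))"
      using assms(1) by (simp add: card_mono)
  qed
  then have "finite {sweepout_width G S H F' | F'. is_sweepout (lcosets\<^bsub>G\<^esub> H) F'}"
    by (intro finite_subset[OF _ finite_atMost]) auto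
  then show ?thesis
    unfolding sweepout_width_min_def using assms(2) by (intro Min_le) auto
qed

lemma schreier_boundary_eq_vertex_boundary:
  "schreier_boundary G S H A = vertex_boundary (schreier_adj G S) (lcosets\<^bsub>G\<^esub> H) A"
  unfolding schreier_boundary_def vertex_boundary_def by simp

context group
begin

lemma l_coset_in_lcosets:
  assumes "subgroup H G" and "g \<in> carrier G" and "x \<in> lcosets H"
  shows "g <#\<^bsub>G\<^esub> x \<in> lcosets H"
proof -
  obtain a where "a \<in> carrier G" "x = a <#\<^bsub>G\<^esub> H"
    using assms(3) unfolding LCOSETS_def by blast
  then have "g <#\<^bsub>G\<^esub> x = (g \<otimes> a) <#\<^bsub>G\<^esub> H"
    using assms(1,2) lcos_m_assoc subgroup.subset by metis
  then show ?thesis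
    using \<open>a \<in> carrier G\<close> assms(2) unfolding LCOSETS_def by blast
qed

lemma l_coset_inv_cancel:
  assumes "subgroup H G" and "g \<in> carrier G" and "x \<in> lcosets H"
  shows "inv g <#\<^bsub>G\<^esub> (g <#\<^bsub>G\<^esub> x) = x"
proof -
  have "x \<subseteq> carrier G"
    using subgroup.lcosets_carrier[OF assms(1) is_group assms(3)] .
  then show ?thesis
    using assms(2) by (simp add: lcos_m_assoc lcos_mult_one)
qed

lemma bij_betw_l_coset_lcosets:
  assumes "subgroup H G" and "g \<in> carrier G"
  shows "bij_betw (\<lambda>x. g <#\<^bsub>G\<^esub> x) (lcosets H) (lcosets H)"
proof (rule bij_betw_byWitness[where f' = "\<lambda>x. inv g <#\<^bsub>G\<^esub> x"])
  show "\<forall>x\<in>lcosets H. inv g <#\<^bsub>G\<^esub> (g <#\<^bsub>G\<^esub> x) = x"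
    using l_coset_inv_cancel[OF assms] by blast
  show "\<forall>x\<in>lcosets H. g <#\<^bsub>G\<^esub> (inv g <#\<^bsub>G\<^esub> x) = x"
    using l_coset_inv_cancel[OF assms(1) inv_closed[OF assms(2)]] assms(2) by simp
  show "(\<lambda>x. g <#\<^bsub>G\<^esub> x) ` (lcosets H) \<subseteq> lcosets H" "(\<lambda>x. inv g <#\<^bsub>G\<^esub> x) ` (lcosets H) \<subseteq> lcosets H"
    using l_coset_in_lcosets[OF assms(1)] assms(2) by auto
qed


lemma sweepout_width_min_le_foelner:
  fixes \<delta> :: real
  assumes "finite S" and "S \<subseteq> carrier G" and S_inv: "\<forall>s\<in>S. inv s \<in> S"
    and "subgroup H G" and "finite (lcosets H)"
    and "finite F" and "F \<noteq> {}" and "F \<subseteq> carrier G" and "\<delta> \<ge> 0"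
    and foelner: "\<And>s. s \<in> S \<Longrightarrow>
      real (card (((s <#\<^bsub>G\<^esub> F) - F) \<union> (F - (s <#\<^bsub>G\<^esub> F)))) \<le> \<delta> * real (card F)"
  shows "real (sweepout_width_min G S H)
           \<le> real (card S) * \<delta> * real (card (lcosets H)) + real (card F)"
proof -
  have inj_mult: "inj_on ((\<otimes>) s) F" if "s \<in> S" for s
    using inj_on_subset[OF inj_on_cmult] that \<open>S \<subseteq> carrier G\<close> \<open>F \<subseteq> carrier G\<close> by blast
  have small_piece: "\<exists>B\<subseteq>W. B \<noteq> {} \<and> card B \<le> card F \<and>
      real (card (vertex_boundary (schreier_adj G S) W B)) \<le> real (card S) * \<delta> * real (card B)"
    if "W \<subseteq> lcosets H" and "W \<noteq> {}" for W
  proof (rule exists_small_piece_with_small_vertex_boundary[where act = "\<lambda>g x. g <#\<^bsub>G\<^esub> x"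
        and mul = "(\<otimes>)"])
    show "bij_betw (\<lambda>x. f <#\<^bsub>G\<^esub> x) (lcosets H) (lcosets H)" if "f \<in> F" for f
      using bij_betw_l_coset_lcosets \<open>subgroup H G\<close> \<open>F \<subseteq> carrier G\<close> that by blast
    show "(s \<otimes> f) <#\<^bsub>G\<^esub> x = s <#\<^bsub>G\<^esub> (f <#\<^bsub>G\<^esub> x)"
      if "s \<in> S" "f \<in> F" "x \<in> lcosets H" for s f x
      using lcos_m_assoc subgroup.lcosets_carrier[OF \<open>subgroup H G\<close> is_group] that
        \<open>S \<subseteq> carrier G\<close> \<open>F \<subseteq> carrier G\<close> by (metis subsetD)
    show "real (card {f\<in>F. s \<otimes> f \<notin> F}) \<le> \<delta> * real (card F)" if "s \<in> S" for s
    proof -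
      have "(\<otimes>) s ` {f\<in>F. s \<otimes> f \<notin> F} \<subseteq> ((s <#\<^bsub>G\<^esub> F) - F) \<union> (F - (s <#\<^bsub>G\<^esub> F))"
        unfolding l_coset_def by auto
      then have "card {f\<in>F. s \<otimes> f \<notin> F} \<le> card (((s <#\<^bsub>G\<^esub> F) - F) \<union> (F - (s <#\<^bsub>G\<^esub> F)))"
        using \<open>finite F\<close> inj_on_subset[OF inj_mult[OF that]]
        by (intro card_inj_on_le) (auto simp: l_coset_def)
      then show ?thesis
        using foelner[OF that] by linarith
    qed
    show "\<exists>s\<in>S. z = s <#\<^bsub>G\<^esub> y"
      if yz: "y \<in> lcosets H" "z \<in> lcosets H" "schreier_adj G S y z" for y z
    proof -
      obtain s where "s \<in> S" "z = s <#\<^bsub>G\<^esub> y \<or> y = s <#\<^bsub>G\<^esub> z"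
        using yz(3) unfolding schreier_adj_def by blast
      moreover have "inv s <#\<^bsub>G\<^esub> (s <#\<^bsub>G\<^esub> z) = z"
        using l_coset_inv_cancel \<open>subgroup H G\<close> \<open>S \<subseteq> carrier G\<close> \<open>s \<in> S\<close> yz(2) by blast
      ultimately show ?thesis
        using S_inv by metis
    qed
  qed (use that assms inj_mult in auto)
  obtain xs where xs: "distinct xs" "set xs = lcosets H"
    "\<forall>j. real (card (vertex_boundary (schreier_adj G S) (lcosets H) (set (take j xs))))
           \<le> real (card S) * \<delta> * real (card (lcosets H)) + real (card F)"
    using exists_enumeration_vertex_boundary_le[OF \<open>finite (lcosets H)\<close> _ small_piece subset_refl]
      \<open>\<delta> \<ge> 0\<close> by auto
  have "sweepout_width_min G S H \<le> sweepout_width G S H (\<lambda>j. set (take j xs))"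
    using sweepout_width_min_le \<open>finite (lcosets H)\<close> is_sweepout_take_enumeration[OF xs(1,2)] .
  also have "real (sweepout_width G S H (\<lambda>j. set (take j xs)))
      \<le> real (card S) * \<delta> * real (card (lcosets H)) + real (card F)"
    using xs(3) by (intro sweepout_width_le) (simp add: schreier_boundary_eq_vertex_boundary)
  finally show ?thesis by simp
qed

lemma sweepout_width_min_le_uniform:
  assumes "amenable_group G" and "finite S" and "S \<subseteq> carrier G" and "\<forall>s\<in>S. inv s \<in> S"
    and "\<epsilon> > 0"
  obtains K where "\<And>H. subgroup H G \<Longrightarrow> finite (lcosets H) \<Longrightarrow>
    real (sweepout_width_min G S H) \<le> \<epsilon> * real (card (lcosets H)) + K"
proof -
  define \<delta> where "\<delta> = \<epsilon> / (real (card S) + 1)"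
  have "\<delta> > 0" and "real (card S) * \<delta> \<le> \<epsilon>"
    using \<open>\<epsilon> > 0\<close> unfolding \<delta>_def by (simp_all add: field_simps)
  then obtain F where F: "finite F" "F \<noteq> {}" "F \<subseteq> carrier G"
    "\<forall>s\<in>S. real (card (((s <#\<^bsub>G\<^esub> F) - F) \<union> (F - (s <#\<^bsub>G\<^esub> F)))) < \<delta> * real (card F)"
    using assms(1)[unfolded amenable_group_def, rule_format, of S \<delta>] assms(2,3) by blast
  show ?thesis
  proof (rule that[of "real (card F)"])
    fix H assume "subgroup H G" and "finite (lcosets H)"
    then have "real (sweepout_width_min G S H)
        \<le> real (card S) * \<delta> * real (card (lcosets H)) + real (card F)"
      using F(4) \<open>\<delta> > 0\<close>
      by (intro sweepout_width_min_le_foelner[OF assms(2-4) _ _ F(1-3)]) (auto simp: less_imp_le)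
    also have "\<dots> \<le> \<epsilon> * real (card (lcosets H)) + real (card F)"
      using \<open>real (card S) * \<delta> \<le> \<epsilon>\<close> by (simp add: mult_right_mono)
    finally show "real (sweepout_width_min G S H) \<le> \<epsilon> * real (card (lcosets H)) + real (card F)" .
  qed
qed

end

theorem theorem1p3:
  fixes G :: "('a, 'b) monoid_scheme" and S :: "'a set" and H :: "nat \<Rightarrow> 'a set"
  assumes "group G"
    and "amenable_group G"
    and "finite S" and "S \<subseteq> carrier G"
    and "\<forall>s\<in>S. inv\<^bsub>G\<^esub> s \<in> S"
    and "generate G S = carrier G"
    and "\<forall>i. subgroup (H i) G"
    and "\<forall>i. finite (lcosets\<^bsub>G\<^esub> (H i))"
    and "filterlim (\<lambda>i. card (lcosets\<^bsub>G\<^esub> (H i))) at_top sequentially"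
  shows "(\<lambda>i. real (sweepout_width_min G S (H i)) / real (card (lcosets\<^bsub>G\<^esub> (H i))))
           \<longlonglongrightarrow> 0"
proof (rule order_tendstoI)
  fix a :: real assume "a < 0"
  then show "\<forall>\<^sub>F i in sequentially.
      a < real (sweepout_width_min G S (H i)) / real (card (lcosets\<^bsub>G\<^esub> (H i)))"
    by (intro always_eventually allI less_le_trans[OF \<open>a < 0\<close>]) simp
next
  fix r :: real assume "r > 0"
  define n where "n i = real (card (lcosets\<^bsub>G\<^esub> (H i)))" for i
  obtain K where K: "\<And>i. real (sweepout_width_min G S (H i)) \<le> r / 2 * n i + K"
    using group.sweepout_width_min_le_uniform[OF assms(1-5), of "r / 2"] \<open>r > 0\<close> assms(7,8)
    unfolding n_def by (metis half_gt_zero)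
  have "filterlim n at_top sequentially"
    unfolding n_def using filterlim_compose[OF filterlim_real_sequentially assms(9)] .
  then have "\<forall>\<^sub>F i in sequentially. K / n i < r / 2" and "\<forall>\<^sub>F i in sequentially. n i > 0"
    using order_tendstoD(2)[OF real_tendsto_divide_at_top[OF tendsto_const], of n sequentially "r / 2"]
      \<open>r > 0\<close> by (simp_all add: filterlim_at_top_dense)
  then show "\<forall>\<^sub>F i in sequentially. real (sweepout_width_min G S (H i)) / n i < r"
  proof eventually_elim
    case (elim i)
    then have "real (sweepout_width_min G S (H i)) < r * n i"
      using K[of i] by (simp add: pos_divide_less_eq)
    then show ?case
      using elim by (simp add: pos_divide_less_eq)
  qed
qed

end
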